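(* Let $q$ be a prime power and $1\le k\le n-1$. If $\mathcal{L}$ is a Cameron-Liebler $k$-set of $\mathrm{AG}(n,q)$ with parameter $x$, then $\mathcal{L}$, viewed as a set of $k$-spaces of the projective closure $\mathrm{PG}(n,q)$ of $\mathrm{AG}(n,q)$, is a Cameron-Liebler $k$-set of $\mathrm{PG}(n,q)$ with parameter $x$.
   Context: A $k$-space is a $k$-dimensional projective subspace. For integers $a,b\ge 0$, $\left[{a\atop b}\right]_q=\frac{(q^a-1)\cdots(q^{a-b+1}-1)}{(q^b-1)\cdots(q-1)}$ (and $0$ if $b>a$). The affine space $\mathrm{AG}(n,q)$ is $\mathrm{PG}(n,q)$ with a hyperplane $\pi_\infty$ (hyperplane at infinity) removed; affine points are points outside $\pi_\infty$, affine $k$-spaces are $k$-spaces of $\mathrm{PG}(n,q)$ not contained in $\pi_\infty$. Let $P_n$ be the point-($k$-space) incidence matrix of $\mathrm{PG}(n,q)$ and $A_n$ the incidence matrix of affine points versus affine $k$-spaces. A set $\mathcal{L}$ of $k$-spaces of $\mathrm{PG}(n,q)$ is a Cameron-Liebler $k$-set of $\mathrm{PG}(n,q)$ if its characteristic vector lies in the real row space $\mathrm{Im}(P_n^T)$, with parameter $|\mathcal{L}|/\left[{n\atop k}\right]_q$. A set of affine $k$-spaces is a Cameron-Liebler $k$-set of $\mathrm{AG}(n,q)$ if its characteristic vector lies in $\mathrm{Im}(A_n^T)$, with parameter $|\mathcal{L}|/\left[{n\atop k}\right]_q$. *)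

theory Defs
  imports "HOL-Analysis.Analysis"
begin

text \<open>PG(n,q) is modelled as the lattice of subspaces of the vector space F^(n+1),
  F a finite field with q = CARD('a) elements, realised as 'a^'n with CARD('n) = n+1.
  A projective k-space is a (k+1)-dimensional vector subspace.\<close>

definition kspace :: "nat \<Rightarrow> ('a::field ^ 'n) set \<Rightarrow> bool" where
  "kspace k S \<longleftrightarrow> vec.subspace S \<and> vec.dim S = k + 1"

definition is_point :: "('a::field ^ 'n) set \<Rightarrow> bool" where
  "is_point P \<longleftrightarrow> kspace 0 P"

definition is_hyperplane :: "nat \<Rightarrow> ('a::field ^ 'n) set \<Rightarrow> bool" where
  "is_hyperplane n H \<longleftrightarrow> kspace (n - 1) H"

definition gauss_binom :: "nat \<Rightarrow> nat \<Rightarrow> nat \<Rightarrow> real" where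
  "gauss_binom q a b = (if b \<le> a then
     (\<Prod>i<b. (real q ^ (a - i) - 1)) / (\<Prod>i<b. (real q ^ (i + 1) - 1)) else 0)"

text \<open>Cameron-Liebler k-set of PG(n,q): the characteristic vector of L (indexed by all
  k-spaces) lies in the real row space of the point-(k-space) incidence matrix P_n,
  i.e. equals P_n^T c for some real vector c indexed by points.\<close>
definition CL_PG :: "nat \<Rightarrow> ('a::{field,finite} ^ 'n) set set \<Rightarrow> bool" where
  "CL_PG k L \<longleftrightarrow> L \<subseteq> {K. kspace k K} \<and>
     (\<exists>c :: ('a ^ 'n) set \<Rightarrow> real. \<forall>K. kspace k K \<longrightarrow>
        (if K \<in> L then 1 else 0) = (\<Sum>P \<in> {P. is_point P \<and> P \<subseteq> K}. c P))"

text \<open>Affine points / affine k-spaces of AG(n,q) = PG(n,q) minus the hyperplane H.\<close>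
definition affine_point :: "('a::field ^ 'n) set \<Rightarrow> ('a ^ 'n) set \<Rightarrow> bool" where
  "affine_point H P \<longleftrightarrow> is_point P \<and> \<not> P \<subseteq> H"

definition affine_kspace :: "('a::field ^ 'n) set \<Rightarrow> nat \<Rightarrow> ('a ^ 'n) set \<Rightarrow> bool" where
  "affine_kspace H k K \<longleftrightarrow> kspace k K \<and> \<not> K \<subseteq> H"

text \<open>Cameron-Liebler k-set of AG(n,q) (hyperplane at infinity H): the characteristic
  vector of L (indexed by affine k-spaces) lies in the real row space of the incidence
  matrix A_n of affine points versus affine k-spaces.\<close>
definition CL_AG :: "('a::{field,finite} ^ 'n) set \<Rightarrow> nat \<Rightarrow> ('a ^ 'n) set set \<Rightarrow> bool" where
  "CL_AG H k L \<longleftrightarrow> L \<subseteq> {K. affine_kspace H k K} \<and>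
     (\<exists>c :: ('a ^ 'n) set \<Rightarrow> real. \<forall>K. affine_kspace H k K \<longrightarrow>
        (if K \<in> L then 1 else 0) = (\<Sum>P \<in> {P. affine_point H P \<and> P \<subseteq> K}. c P))"

definition CL_param :: "nat \<Rightarrow> nat \<Rightarrow> ('a::{field,finite} ^ 'n) set set \<Rightarrow> real" where
  "CL_param n k L = real (card L) / gauss_binom CARD('a) n k"

end

theory Submission
  imports Defs
begin

text \<open>Extend a weight vector on the affine points by zero on the points at infinity. Over an
  affine k-space it then has the same sum as before, and over a k-space contained in the
  hyperplane at infinity it sums to 0, which is the correct value since such a space is not
  affine and hence not in the set.\<close>

lemma sum_points_zero_at_infinity:
  fixes K H :: "('a::{field,finite} ^ 'n) set"
  shows "(\<Sum>P \<in> {P. is_point P \<and> P \<subseteq> K}. if P \<subseteq> H then 0 else c P)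
       = (\<Sum>P \<in> {P. affine_point H P \<and> P \<subseteq> K}. c P)"
proof -
  have "(\<Sum>P \<in> {P. is_point P \<and> P \<subseteq> K}. if P \<subseteq> H then 0 else c P)
      = (\<Sum>P \<in> {P. is_point P \<and> P \<subseteq> K}. if \<not> P \<subseteq> H then c P else 0)"
    by (rule sum.cong) auto
  also have "\<dots> = (\<Sum>P \<in> {P \<in> {P. is_point P \<and> P \<subseteq> K}. \<not> P \<subseteq> H}. c P)"
    by (rule sum.inter_filter[symmetric]) simp
  also have "{P \<in> {P. is_point P \<and> P \<subseteq> K}. \<not> P \<subseteq> H} = {P. affine_point H P \<and> P \<subseteq> K}"
    by (auto simp: affine_point_def)
  finally show ?thesis .
qed

lemma CL_AG_imp_CL_PG:
  fixes H :: "('a::{field,finite} ^ 'n) set"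
  assumes "CL_AG H k L"
  shows "CL_PG k L"
proof -
  from assms obtain c :: "('a ^ 'n) set \<Rightarrow> real" where
    L_affine: "L \<subseteq> {K. affine_kspace H k K}" and
    c: "\<And>K. affine_kspace H k K \<Longrightarrow>
        (if K \<in> L then 1 else 0) = (\<Sum>P \<in> {P. affine_point H P \<and> P \<subseteq> K}. c P)"
    unfolding CL_AG_def by blast
  have "(if K \<in> L then 1 else 0)
        = (\<Sum>P \<in> {P. is_point P \<and> P \<subseteq> K}. if P \<subseteq> H then 0 else c P)"
    if K: "kspace k K" for K
  proof (cases "K \<subseteq> H")
    case True
    then have "K \<notin> L" and "{P. affine_point H P \<and> P \<subseteq> K} = {}"
      using L_affine by (auto simp: affine_kspace_def affine_point_def)
    then show ?thesis by (simp only: sum_points_zero_at_infinity) simp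
  next
    case False
    then show ?thesis using K c by (simp add: sum_points_zero_at_infinity affine_kspace_def)
  qed
  moreover have "L \<subseteq> {K. kspace k K}"
    using L_affine by (auto simp: affine_kspace_def)
  ultimately show ?thesis
    unfolding CL_PG_def by blast
qed

theorem theorem1p2:
  fixes H :: "('a::{field,finite} ^ 'n) set"
    and L :: "('a ^ 'n) set set"
    and n k :: nat and x :: real
  assumes "CARD('n) = n + 1"
    and "1 \<le> k" and "k \<le> n - 1"
    and "is_hyperplane n H"
    and "CL_AG H k L" and "x = CL_param n k L"
  shows "CL_PG k L \<and> x = CL_param n k L"
  using CL_AG_imp_CL_PG[OF \<open>CL_AG H k L\<close>] \<open>x = CL_param n k L\<close> by blast

end
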